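(* Consider a cellular network with $n$ base stations $\mathcal{N}=\{1,\dots,n\}$, base station $i$ serving a nonempty set $\mathcal{J}_i$ of users (pairwise disjoint), channel gains $g_{kj}>0$, noise power $\sigma^2>0$, and $$f_i(\mathbf{x};\mathbf{r},\mathbf{p})=\sum_{j\in\mathcal{J}_i}\frac{r_{ij}}{\log\Big(1+\frac{p_i g_{ij}}{\sum_{k\ne i} p_k g_{kj} x_k+\sigma^2}\Big)}.$$ Let a load vector $\mathbf{x}>\mathbf{0}$ and a rate vector $\mathbf{r}>\mathbf{0}$ be given. Then the power vectors $\mathbf{p}>\mathbf{0}$ satisfying $\mathbf{x}=\mathbf{f}(\mathbf{x};\mathbf{r},\mathbf{p})$ are exactly those satisfying the non-linear power coupling equation (NPCE) $\mathbf{p}=\mathbf{h}(\mathbf{p};\mathbf{x},\mathbf{r})$, where $\mathbf{h}(\cdot;\mathbf{x},\mathbf{r})$ is a standard interference function. Moreover, if a solution $\mathbf{p}$ exists, then it is unique and is obtained as the limit of the iterative algorithm for power (IAP): both the synchronous iteration $\mathbf{p}^{\ell}=\mathbf{h}(\mathbf{p}^{\ell-1};\mathbf{x},\mathbf{r})$, $\ell=1,2,\dots$, and the asynchronous iteration (in which, in each outer iteration, the components $i=1,\dots,n$ are updated one at a time by $p_i\leftarrow h_i(\bar{\mathbf{p}}_i;\mathbf{x},\mathbf{r})$ using the most recently updated values of the other components) converge to $\mathbf{p}$ from any initial power vector $\mathbf{p}^0>\mathbf{0}$.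
   Context: Vector inequalities are componentwise; $\log$ is natural logarithm. For a vector $\mathbf{p}$, $\bar{\mathbf{p}}_i\in\mathbb{R}^{n-1}$ denotes $\mathbf{p}$ with its $i$th component removed. For $\bar{\mathbf{p}}_i\ge\mathbf{0}$, $h_i(\bar{\mathbf{p}}_i;\mathbf{x},\mathbf{r})$ is defined as the unique $p_i>0$ satisfying $$1=\eta_i(p_i):=\sum_{j\in\mathcal{J}_i}\frac{r_{ij}/x_i}{\log\big(1+p_i\, g_{ij}/(\sum_{k\ne i}p_kg_{kj}x_k+\sigma^2)\big)}$$ (equivalently $x_i=f_i(\mathbf{x};\mathbf{r},\mathbf{p})$), and $\mathbf{h}(\mathbf{p};\mathbf{x},\mathbf{r})=(h_1(\bar{\mathbf{p}}_1;\mathbf{x},\mathbf{r}),\dots,h_n(\bar{\mathbf{p}}_n;\mathbf{x},\mathbf{r}))^T$. A function $\mathbf{I}:\mathbb{R}^n_+\to\mathbb{R}^n_+$ is a standard interference function if for all $\mathbf{p}\ge\mathbf{0}$: (positivity) $\mathbf{I}(\mathbf{p})>\mathbf{0}$; (monotonicity) $\mathbf{p}\ge\mathbf{p}'$ implies $\mathbf{I}(\mathbf{p})\ge\mathbf{I}(\mathbf{p}')$; (scalability) for all $\alpha>1$, $\alpha\mathbf{I}(\mathbf{p})>\mathbf{I}(\alpha\mathbf{p})$. *)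

theory Defs
  imports Complex_Main
begin

text \<open>Base stations are indexed by a finite linearly ordered type 'n (the order
  fixes the update order 1,...,n of the asynchronous iteration); users by a type 'u.\<close>

definition load_f ::
  "('n::finite \<Rightarrow> 'u \<Rightarrow> real) \<Rightarrow> real \<Rightarrow> ('n \<Rightarrow> 'u set) \<Rightarrow>
   ('n \<Rightarrow> real) \<Rightarrow> ('n \<Rightarrow> 'u \<Rightarrow> real) \<Rightarrow> ('n \<Rightarrow> real) \<Rightarrow> 'n \<Rightarrow> real" where
  "load_f g \<sigma>2 J x r p i =
     (\<Sum>j\<in>J i. r i j /
        ln (1 + p i * g i j / ((\<Sum>k\<in>UNIV - {i}. p k * g k j * x k) + \<sigma>2)))"

text \<open>eta_i(q), where q plays the role of p_i and p supplies the other components.\<close>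
definition eta ::
  "('n::finite \<Rightarrow> 'u \<Rightarrow> real) \<Rightarrow> real \<Rightarrow> ('n \<Rightarrow> 'u set) \<Rightarrow>
   ('n \<Rightarrow> real) \<Rightarrow> ('n \<Rightarrow> 'u \<Rightarrow> real) \<Rightarrow> ('n \<Rightarrow> real) \<Rightarrow> 'n \<Rightarrow> real \<Rightarrow> real" where
  "eta g \<sigma>2 J x r p i q =
     (\<Sum>j\<in>J i. (r i j / x i) /
        ln (1 + q * g i j / ((\<Sum>k\<in>UNIV - {i}. p k * g k j * x k) + \<sigma>2)))"

text \<open>h_i(p-bar_i; x, r): the unique q > 0 with eta_i(q) = 1 (depends only on p_k, k \<noteq> i).\<close>
definition h_comp ::
  "('n::finite \<Rightarrow> 'u \<Rightarrow> real) \<Rightarrow> real \<Rightarrow> ('n \<Rightarrow> 'u set) \<Rightarrow>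
   ('n \<Rightarrow> real) \<Rightarrow> ('n \<Rightarrow> 'u \<Rightarrow> real) \<Rightarrow> ('n \<Rightarrow> real) \<Rightarrow> 'n \<Rightarrow> real" where
  "h_comp g \<sigma>2 J x r p i = (THE q. q > 0 \<and> eta g \<sigma>2 J x r p i q = 1)"

definition h_vec ::
  "('n::finite \<Rightarrow> 'u \<Rightarrow> real) \<Rightarrow> real \<Rightarrow> ('n \<Rightarrow> 'u set) \<Rightarrow>
   ('n \<Rightarrow> real) \<Rightarrow> ('n \<Rightarrow> 'u \<Rightarrow> real) \<Rightarrow> ('n \<Rightarrow> real) \<Rightarrow> ('n \<Rightarrow> real)" where
  "h_vec g \<sigma>2 J x r p = (\<lambda>i. h_comp g \<sigma>2 J x r p i)"

definition iap_async_sweep ::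
  "('n::{finite,linorder} \<Rightarrow> 'u \<Rightarrow> real) \<Rightarrow> real \<Rightarrow> ('n \<Rightarrow> 'u set) \<Rightarrow>
   ('n \<Rightarrow> real) \<Rightarrow> ('n \<Rightarrow> 'u \<Rightarrow> real) \<Rightarrow> ('n \<Rightarrow> real) \<Rightarrow> ('n \<Rightarrow> real)" where
  "iap_async_sweep g \<sigma>2 J x r p =
     fold (\<lambda>i q. q(i := h_comp g \<sigma>2 J x r q i)) (sorted_list_of_set (UNIV :: 'n set)) p"

definition standard_interference :: "(('n \<Rightarrow> real) \<Rightarrow> ('n \<Rightarrow> real)) \<Rightarrow> bool" where
  "standard_interference I \<longleftrightarrow>
     (\<forall>p. (\<forall>i. p i \<ge> 0) \<longrightarrow> (\<forall>i. I p i > 0)) \<and>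
     (\<forall>p p'. (\<forall>i. p' i \<ge> 0) \<and> (\<forall>i. p' i \<le> p i) \<longrightarrow> (\<forall>i. I p' i \<le> I p i)) \<and>
     (\<forall>p. (\<forall>i. p i \<ge> 0) \<longrightarrow> (\<forall>\<alpha>::real. \<alpha> > 1 \<longrightarrow> (\<forall>i. \<alpha> * I p i > I (\<lambda>k. \<alpha> * p k) i)))"

end

theory Submission
  imports Defs
begin

text \<open>For fixed powers of the other stations, the i-th load equation x_i = f_i is equivalent
  to eta_i(p_i) = 1, and eta_i is a sum of terms c / ln (1 + t p_i) that decreases strictly from
  \<infinity> to 0; so it has a unique root h_i, and x = f(x) means exactly p = h(p). More power at the
  other stations means more interference, hence larger eta_i and larger h_i, and scaling all
  powers by \<alpha> > 1 scales the interference-plus-noise by less than \<alpha> because the noise is fixed,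
  which gives strict scalability. Yates' theory of standard interference functions then yields
  uniqueness of a positive fixed point and convergence of the iteration from any positive start,
  by sandwiching it between monotone iterations from p / \<alpha> and \<alpha> p. A Gauss-Seidel sweep of a
  standard interference function is again one, with the same fixed points, which covers the
  asynchronous iteration.\<close>

section \<open>Standard interference functions\<close>

lemma standard_interference_pos:
  "standard_interference T \<Longrightarrow> \<forall>i. 0 \<le> p i \<Longrightarrow> 0 < T p i"
  unfolding standard_interference_def by blast

lemma standard_interference_mono:
  "standard_interference T \<Longrightarrow> \<forall>i. 0 \<le> p' i \<Longrightarrow> \<forall>i. p' i \<le> p i \<Longrightarrow> T p' i \<le> T p i"
  unfolding standard_interference_def by blast

lemma standard_interference_scale:
  "standard_interference T \<Longrightarrow> \<forall>i. 0 \<le> p i \<Longrightarrow> 1 < \<alpha> \<Longrightarrow> T (\<lambda>k. \<alpha> * p k) i < \<alpha> * T p i"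
  unfolding standard_interference_def by blast

lemma standard_interference_funpow_nonneg:
  assumes T: "standard_interference T" and a: "\<forall>i. 0 \<le> a i"
  shows "0 \<le> (T ^^ l) a i"
  using a standard_interference_pos[OF T, of "(T ^^ _) a"]
  by (induction l arbitrary: i) (auto intro: less_imp_le)

lemma standard_interference_funpow_mono:
  assumes T: "standard_interference T" and a: "\<forall>i. 0 \<le> a i" and le: "\<forall>i. a i \<le> b i"
  shows "(T ^^ l) a i \<le> (T ^^ l) b i"
proof (induction l arbitrary: i)
  case 0
  then show ?case using le by simp
next
  case (Suc l)
  then show ?case
    using standard_interference_mono[OF T] standard_interference_funpow_nonneg[OF T a] by simp
qed

lemma funpow_fixpoint: "T p = p \<Longrightarrow> (T ^^ l) p = p"
  by (induction l) auto

text \<open>Take the least m with q \<le> m p; if m > 1, scalability at a coordinate where q = m p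
  is attained gives a contradiction.\<close>
lemma standard_interference_fixpoint_le:
  fixes T :: "('n::finite \<Rightarrow> real) \<Rightarrow> ('n \<Rightarrow> real)"
  assumes T: "standard_interference T" and p: "\<forall>i. 0 < p i" "T p = p"
    and q: "\<forall>i. 0 < q i" "T q = q"
  shows "q i \<le> p i"
proof -
  define m where "m = Max (range (\<lambda>i. q i / p i))"
  have "m \<in> range (\<lambda>i. q i / p i)" unfolding m_def by (intro Max_in) auto
  then obtain i0 where i0: "m = q i0 / p i0" by auto
  have q_le: "q k \<le> m * p k" for k
    using Max_ge[of "range (\<lambda>i. q i / p i)" "q k / p k"] p(1) unfolding m_def
    by (simp add: divide_le_eq)
  show ?thesis
  proof (cases "m \<le> 1")
    case True
    then show ?thesis
      using q_le[of i] mult_right_mono[OF True less_imp_le[OF p(1)[rule_format, of i]]] by simp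
  next
    case False
    have "q i0 = T q i0" using q by simp
    also have "\<dots> \<le> T (\<lambda>k. m * p k) i0"
      using standard_interference_mono[OF T] q(1) q_le by (simp add: less_imp_le)
    also have "\<dots> < m * T p i0"
      using p(1) False by (intro standard_interference_scale[OF T]) (auto intro: less_imp_le)
    also have "\<dots> = q i0" using p i0 by (simp add: less_imp_neq[symmetric])
    finally show ?thesis by simp
  qed
qed

lemma standard_interference_fixpoint_unique:
  fixes T :: "('n::finite \<Rightarrow> real) \<Rightarrow> ('n \<Rightarrow> real)"
  assumes T: "standard_interference T" and "\<forall>i. 0 < p i" "T p = p" and "\<forall>i. 0 < q i" "T q = q"
  shows "q = p"
  using standard_interference_fixpoint_le[OF T] assms by (intro ext antisym) blast

lemma le_of_forall_le_mult:
  fixes a b :: real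
  assumes "0 \<le> b" and "\<And>\<beta>. 1 < \<beta> \<Longrightarrow> a \<le> \<beta> * b"
  shows "a \<le> b"
proof (rule field_le_mult_one_interval)
  fix z :: real assume z: "0 < z" "z < 1"
  have "a \<le> (1 / z) * b" using assms(2)[of "1 / z"] z by simp
  then show "z * a \<le> b" using z by (simp add: field_simps)
qed

lemma standard_interference_ratio_bounds:
  assumes T: "standard_interference T" and u: "\<forall>k. 0 < u k" and \<beta>: "1 < \<beta>"
    and v: "\<forall>k. u k / \<beta> \<le> v k \<and> v k \<le> \<beta> * u k"
  shows "T u i / \<beta> \<le> T v i \<and> T v i \<le> \<beta> * T u i"
proof
  have u\<beta>: "\<forall>k. 0 \<le> u k / \<beta>" "\<forall>k. 0 \<le> \<beta> * u k" using u \<beta> by (simp_all add: less_imp_le)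
  have "T u i = T (\<lambda>k. \<beta> * (u k / \<beta>)) i" using \<beta> by simp
  also have "\<dots> < \<beta> * T (\<lambda>k. u k / \<beta>) i" by (rule standard_interference_scale[OF T u\<beta>(1) \<beta>])
  also have "T (\<lambda>k. u k / \<beta>) i \<le> T v i" using standard_interference_mono[OF T u\<beta>(1)] v by simp
  finally show "T u i / \<beta> \<le> T v i" using \<beta> by (simp add: divide_le_eq mult.commute)
  have "T v i \<le> T (\<lambda>k. \<beta> * u k) i"
    using standard_interference_mono[OF T] u\<beta>(1) v by (meson order_trans)
  also have "\<dots> < \<beta> * T u i" using standard_interference_scale[OF T] u \<beta> by (simp add: less_imp_le)
  finally show "T v i \<le> \<beta> * T u i" by simp
qed

text \<open>The ratio bounds replace continuity of T in passing to the limit of the iteration.\<close>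
lemma standard_interference_limit_fixpoint:
  fixes T :: "('n::finite \<Rightarrow> real) \<Rightarrow> ('n \<Rightarrow> real)"
  assumes T: "standard_interference T"
    and lim: "\<And>i. (\<lambda>l. (T ^^ l) a i) \<longlonglongrightarrow> u i" and u: "\<forall>i. 0 < u i"
  shows "T u = u"
proof (rule ext, rule antisym)
  fix i
  have bounds: "T u i \<le> \<beta> * u i \<and> u i \<le> \<beta> * T u i" if \<beta>: "1 < \<beta>" for \<beta>
  proof -
    have "\<forall>\<^sub>F l in sequentially. u k / \<beta> \<le> (T ^^ l) a k \<and> (T ^^ l) a k \<le> \<beta> * u k" for k
    proof -
      have "u k / \<beta> < u k" "u k < \<beta> * u k" using u \<beta> by (simp_all add: divide_less_eq)
      then have "\<forall>\<^sub>F l in sequentially. u k / \<beta> < (T ^^ l) a k"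
        "\<forall>\<^sub>F l in sequentially. (T ^^ l) a k < \<beta> * u k"
        using order_tendstoD[OF lim[of k]] by blast+
      then show ?thesis by eventually_elim simp
    qed
    then have "\<forall>\<^sub>F l in sequentially. \<forall>k. u k / \<beta> \<le> (T ^^ l) a k \<and> (T ^^ l) a k \<le> \<beta> * u k"
      by (rule eventually_all_finite)
    then have ev: "\<forall>\<^sub>F l in sequentially.
        T u i / \<beta> \<le> (T ^^ Suc l) a i \<and> (T ^^ Suc l) a i \<le> \<beta> * T u i"
      by eventually_elim (simp add: standard_interference_ratio_bounds[OF T u \<beta>])
    have lim_Suc: "(\<lambda>l. (T ^^ Suc l) a i) \<longlonglongrightarrow> u i" using LIMSEQ_Suc[OF lim[of i]] .
    have "T u i / \<beta> \<le> u i" "u i \<le> \<beta> * T u i"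
      by (rule tendsto_lowerbound[OF lim_Suc] tendsto_upperbound[OF lim_Suc],
          use ev in \<open>auto elim: eventually_mono\<close>)+
    then show ?thesis using \<beta> by (simp add: divide_le_eq mult.commute)
  qed
  have "0 \<le> u i" "0 \<le> T u i"
    using u standard_interference_pos[OF T, of u i] by (simp_all add: less_imp_le)
  then show "T u i \<le> u i" "u i \<le> T u i"
    using bounds by (metis le_of_forall_le_mult)+
qed

lemma standard_interference_iterates_tendsto_from_above:
  fixes T :: "('n::finite \<Rightarrow> real) \<Rightarrow> ('n \<Rightarrow> real)"
  assumes T: "standard_interference T" and p: "\<forall>i. 0 < p i" "T p = p"
    and above: "\<forall>i. p i \<le> a i" and super: "\<forall>i. T a i \<le> a i"
  shows "(\<lambda>l. (T ^^ l) a i) \<longlonglongrightarrow> p i"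
proof -
  have p0: "\<forall>i. 0 \<le> p i" using p(1) by (simp add: less_imp_le)
  have a: "\<forall>i. 0 \<le> a i"
  proof
    fix i show "0 \<le> a i" using p0[rule_format, of i] above[rule_format, of i] by linarith
  qed
  have lower: "p k \<le> (T ^^ l) a k" for l k
    using standard_interference_funpow_mono[OF T p0 above, of l k] funpow_fixpoint[of T p, OF p(2)]
    by simp
  have dec: "decseq (\<lambda>l. (T ^^ l) a k)" for k
  proof (rule decseq_SucI)
    fix l
    have "\<forall>i. 0 \<le> T a i" using standard_interference_pos[OF T a] by (simp add: less_imp_le)
    then have "(T ^^ l) (T a) k \<le> (T ^^ l) a k"
      by (rule standard_interference_funpow_mono[OF T _ super])
    then show "(T ^^ Suc l) a k \<le> (T ^^ l) a k" by (simp add: funpow_Suc_right del: funpow.simps)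
  qed
  have "\<forall>k. \<exists>L. (\<lambda>l. (T ^^ l) a k) \<longlonglongrightarrow> L"
  proof
    fix k
    have "\<forall>l. p k \<le> (T ^^ l) a k" using lower by simp
    with decseq_convergent[OF dec[of k]] show "\<exists>L. (\<lambda>l. (T ^^ l) a k) \<longlonglongrightarrow> L" by blast
  qed
  then obtain u where "\<forall>k. (\<lambda>l. (T ^^ l) a k) \<longlonglongrightarrow> u k" by (rule choice[THEN exE])
  then have lim: "(\<lambda>l. (T ^^ l) a k) \<longlonglongrightarrow> u k" for k by simp
  have "p k \<le> u k" for k by (rule LIMSEQ_le_const[OF lim]) (use lower in blast)
  then have u: "\<forall>k. 0 < u k" using p(1) by (metis order.strict_trans2)
  have "u = p"
    using standard_interference_fixpoint_unique[OF T p u]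
      standard_interference_limit_fixpoint[OF T lim u] by simp
  then show ?thesis using lim by simp
qed

lemma standard_interference_iterates_tendsto_from_below:
  fixes T :: "('n::finite \<Rightarrow> real) \<Rightarrow> ('n \<Rightarrow> real)"
  assumes T: "standard_interference T" and p: "\<forall>i. 0 < p i" "T p = p"
    and a: "\<forall>i. 0 < a i" and below: "\<forall>i. a i \<le> p i" and sub: "\<forall>i. a i \<le> T a i"
  shows "(\<lambda>l. (T ^^ l) a i) \<longlonglongrightarrow> p i"
proof -
  have a0: "\<forall>i. 0 \<le> a i" using a by (simp add: less_imp_le)
  have upper: "(T ^^ l) a k \<le> p k" for l k
    using standard_interference_funpow_mono[OF T a0 below, of l k] funpow_fixpoint[of T p, OF p(2)]
    by simp
  have inc: "incseq (\<lambda>l. (T ^^ l) a k)" for k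
  proof (rule incseq_SucI)
    fix l
    have "(T ^^ l) a k \<le> (T ^^ l) (T a) k" by (rule standard_interference_funpow_mono[OF T a0 sub])
    then show "(T ^^ l) a k \<le> (T ^^ Suc l) a k" by (simp add: funpow_Suc_right del: funpow.simps)
  qed
  have "\<forall>k. \<exists>L. (\<lambda>l. (T ^^ l) a k) \<longlonglongrightarrow> L"
  proof
    fix k
    have "\<forall>l. (T ^^ l) a k \<le> p k" using upper by simp
    with incseq_convergent[OF inc[of k]] show "\<exists>L. (\<lambda>l. (T ^^ l) a k) \<longlonglongrightarrow> L" by blast
  qed
  then obtain v where "\<forall>k. (\<lambda>l. (T ^^ l) a k) \<longlonglongrightarrow> v k" by (rule choice[THEN exE])
  then have lim: "(\<lambda>l. (T ^^ l) a k) \<longlonglongrightarrow> v k" for k by simp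
  have "a k \<le> v k" for k
    using incseq_le[OF inc lim, of 0] by simp
  then have v: "\<forall>k. 0 < v k" using a by (metis order.strict_trans2)
  have "v = p"
    using standard_interference_fixpoint_unique[OF T p v]
      standard_interference_limit_fixpoint[OF T lim v] by simp
  then show ?thesis using lim by simp
qed

lemma standard_interference_iterates_tendsto:
  fixes T :: "('n::finite \<Rightarrow> real) \<Rightarrow> ('n \<Rightarrow> real)"
  assumes T: "standard_interference T" and p: "\<forall>i. 0 < p i" "T p = p" and p0: "\<forall>i. 0 < p0 i"
  shows "(\<lambda>l. (T ^^ l) p0 i) \<longlonglongrightarrow> p i"
proof -
  define S where "S = (\<Sum>k\<in>UNIV. p0 k / p k + p k / p0 k)"
  define \<alpha> where "\<alpha> = 1 + S"
  have pos: "0 < p0 k / p k" "0 < p k / p0 k" for k using p(1) p0 by simp_all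
  have S_ge: "p0 k / p k + p k / p0 k \<le> S" for k
    unfolding S_def using pos by (intro member_le_sum) (auto intro: add_nonneg_nonneg less_imp_le)
  have \<alpha>: "1 < \<alpha>" using S_ge[of undefined] pos[of undefined] unfolding \<alpha>_def by linarith
  have "p0 k / p k < \<alpha>" "p k / p0 k < \<alpha>" for k
    using S_ge[of k] pos[of k] unfolding \<alpha>_def by linarith+
  then have up: "p0 k \<le> \<alpha> * p k" and low: "p k / \<alpha> \<le> p0 k" for k
    using p(1)[rule_format, of k] p0[rule_format, of k] \<alpha>
    by (simp_all add: divide_less_eq less_imp_le mult.commute)
  have super: "\<forall>k. T (\<lambda>k. \<alpha> * p k) k \<le> \<alpha> * p k"
    using standard_interference_scale[OF T _ \<alpha>, of p] p by (auto intro: less_imp_le)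
  have sub: "\<forall>k. p k / \<alpha> \<le> T (\<lambda>k. p k / \<alpha>) k"
  proof
    fix k
    have "p k = T (\<lambda>j. \<alpha> * (p j / \<alpha>)) k" using p(2) \<alpha> by simp
    also have "\<dots> < \<alpha> * T (\<lambda>j. p j / \<alpha>) k"
      using p(1) \<alpha> by (intro standard_interference_scale[OF T]) (auto intro: less_imp_le)
    finally show "p k / \<alpha> \<le> T (\<lambda>k. p k / \<alpha>) k" using \<alpha> by (simp add: field_simps)
  qed
  show ?thesis
  proof (rule real_tendsto_sandwich)
    show "\<forall>\<^sub>F l in sequentially. (T ^^ l) (\<lambda>k. p k / \<alpha>) i \<le> (T ^^ l) p0 i"
      using p(1) \<alpha> low
      by (intro always_eventually allI standard_interference_funpow_mono[OF T])
        (auto intro: divide_nonneg_pos less_imp_le)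
    show "\<forall>\<^sub>F l in sequentially. (T ^^ l) p0 i \<le> (T ^^ l) (\<lambda>k. \<alpha> * p k) i"
      using p0 up by (intro always_eventually allI standard_interference_funpow_mono[OF T])
        (auto intro: less_imp_le)
    show "(\<lambda>l. (T ^^ l) (\<lambda>k. p k / \<alpha>) i) \<longlonglongrightarrow> p i"
      using p \<alpha> sub
      by (intro standard_interference_iterates_tendsto_from_below[OF T]) (auto simp: divide_le_eq)
    show "(\<lambda>l. (T ^^ l) (\<lambda>k. \<alpha> * p k) i) \<longlonglongrightarrow> p i"
      using p \<alpha> super by (intro standard_interference_iterates_tendsto_from_above[OF T]) auto
  qed
qed

section \<open>Gauss-Seidel sweeps\<close>

definition gauss_seidel_sweep ::
  "'n list \<Rightarrow> (('n \<Rightarrow> real) \<Rightarrow> ('n \<Rightarrow> real)) \<Rightarrow> ('n \<Rightarrow> real) \<Rightarrow> ('n \<Rightarrow> real)" where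
  "gauss_seidel_sweep is T = fold (\<lambda>i q. q(i := T q i)) is"

lemma gauss_seidel_sweep_Nil [simp]: "gauss_seidel_sweep [] T q = q"
  by (simp add: gauss_seidel_sweep_def)

lemma gauss_seidel_sweep_Cons [simp]:
  "gauss_seidel_sweep (i # is) T q = gauss_seidel_sweep is T (q(i := T q i))"
  by (simp add: gauss_seidel_sweep_def)

lemma gauss_seidel_sweep_nonneg_pos:
  assumes T: "standard_interference T" and q: "\<forall>k. 0 \<le> q k"
  shows "0 \<le> gauss_seidel_sweep is T q k
    \<and> (0 < q k \<or> k \<in> set is \<longrightarrow> 0 < gauss_seidel_sweep is T q k)"
  using q
proof (induction "is" arbitrary: q)
  case Nil
  then show ?case by simp
next
  case (Cons i "is")
  have "0 < T q i" using standard_interference_pos[OF T Cons.prems] .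
  then have "\<forall>k. 0 \<le> (q(i := T q i)) k" "0 < q k \<or> k = i \<longrightarrow> 0 < (q(i := T q i)) k"
    using Cons.prems by auto
  then show ?case using Cons.IH by auto
qed

lemma gauss_seidel_sweep_mono:
  assumes T: "standard_interference T"
  shows "\<forall>k. 0 \<le> q' k \<Longrightarrow> \<forall>k. q' k \<le> q k \<Longrightarrow>
    gauss_seidel_sweep is T q' k \<le> gauss_seidel_sweep is T q k"
proof (induction "is" arbitrary: q q')
  case Nil
  then show ?case by simp
next
  case (Cons i "is")
  have "\<forall>k. 0 \<le> (q'(i := T q' i)) k"
    using Cons.prems(1) standard_interference_pos[OF T Cons.prems(1), of i] by simp
  moreover have "\<forall>k. (q'(i := T q' i)) k \<le> (q(i := T q i)) k"
    using Cons.prems standard_interference_mono[OF T Cons.prems, of i] by simp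
  ultimately show ?case using Cons.IH by simp
qed

lemma gauss_seidel_sweep_scale:
  assumes T: "standard_interference T" and \<alpha>: "1 < \<alpha>"
  shows "\<forall>k. 0 \<le> s k \<Longrightarrow> \<forall>k. 0 \<le> s' k \<Longrightarrow> \<forall>k. s' k \<le> \<alpha> * s k \<Longrightarrow>
    gauss_seidel_sweep is T s' k \<le> \<alpha> * gauss_seidel_sweep is T s k
    \<and> (s' k < \<alpha> * s k \<or> k \<in> set is \<longrightarrow>
         gauss_seidel_sweep is T s' k < \<alpha> * gauss_seidel_sweep is T s k)"
proof (induction "is" arbitrary: s s' k)
  case Nil
  then show ?case by simp
next
  case (Cons i "is")
  have "\<forall>k. 0 \<le> \<alpha> * s k" using Cons.prems(1) \<alpha> by simp
  then have "T s' i \<le> T (\<lambda>k. \<alpha> * s k) i"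
    using standard_interference_mono[OF T Cons.prems(2)] Cons.prems(3) by simp
  also have "\<dots> < \<alpha> * T s i" using standard_interference_scale[OF T Cons.prems(1) \<alpha>] .
  finally have step: "T s' i < \<alpha> * T s i" .
  have "\<forall>k. 0 \<le> (s(i := T s i)) k" "\<forall>k. 0 \<le> (s'(i := T s' i)) k"
    using Cons.prems(1,2) standard_interference_pos[OF T] by (simp_all add: less_imp_le)
  moreover have "\<forall>k. (s'(i := T s' i)) k \<le> \<alpha> * (s(i := T s i)) k"
    "s' k < \<alpha> * s k \<or> k = i \<longrightarrow> (s'(i := T s' i)) k < \<alpha> * (s(i := T s i)) k"
    using Cons.prems(3) step by auto
  ultimately show ?case using Cons.IH by auto
qed

lemma gauss_seidel_sweep_fixpoint: "T p = p \<Longrightarrow> gauss_seidel_sweep is T p = p"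
  by (induction "is") simp_all

lemma standard_interference_gauss_seidel_sweep:
  fixes T :: "('n \<Rightarrow> real) \<Rightarrow> ('n \<Rightarrow> real)"
  assumes T: "standard_interference T" and "is": "set is = UNIV"
  shows "standard_interference (gauss_seidel_sweep is T)"
  unfolding standard_interference_def
proof (intro conjI allI impI)
  fix p :: "'n \<Rightarrow> real" and i
  assume "\<forall>i. 0 \<le> p i"
  then show "0 < gauss_seidel_sweep is T p i"
    using gauss_seidel_sweep_nonneg_pos[OF T] "is" by blast
next
  fix p p' :: "'n \<Rightarrow> real" and i
  assume "(\<forall>i. 0 \<le> p' i) \<and> (\<forall>i. p' i \<le> p i)"
  then show "gauss_seidel_sweep is T p' i \<le> gauss_seidel_sweep is T p i"
    using gauss_seidel_sweep_mono[OF T] by blast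
next
  fix p :: "'n \<Rightarrow> real" and \<alpha> :: real and i
  assume p: "\<forall>i. 0 \<le> p i" and \<alpha>: "1 < \<alpha>"
  then have "\<forall>k. 0 \<le> \<alpha> * p k" by simp
  then show "gauss_seidel_sweep is T (\<lambda>k. \<alpha> * p k) i < \<alpha> * gauss_seidel_sweep is T p i"
    using gauss_seidel_sweep_scale[OF T \<alpha> p, of "\<lambda>k. \<alpha> * p k" "is" i] "is" by simp
qed

section \<open>Sums of reciprocal logarithms\<close>

lemma sum_divide_ln_one_plus_antimono:
  fixes c t t' :: "'a \<Rightarrow> real"
  assumes c: "\<And>j. j \<in> A \<Longrightarrow> 0 < c j" and t: "\<And>j. j \<in> A \<Longrightarrow> 0 < t j"
    and le: "\<And>j. j \<in> A \<Longrightarrow> t j \<le> t' j"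
  shows "(\<Sum>j\<in>A. c j / ln (1 + t' j)) \<le> (\<Sum>j\<in>A. c j / ln (1 + t j))"
proof (rule sum_mono)
  fix j assume j: "j \<in> A"
  have "0 < ln (1 + t j)" "ln (1 + t j) \<le> ln (1 + t' j)" using t[OF j] le[OF j] by simp_all
  then show "c j / ln (1 + t' j) \<le> c j / ln (1 + t j)"
    using c[OF j] by (intro divide_left_mono) auto
qed

lemma sum_divide_ln_one_plus_strict_antimono:
  fixes c t t' :: "'a \<Rightarrow> real"
  assumes "finite A" "A \<noteq> {}" and c: "\<And>j. j \<in> A \<Longrightarrow> 0 < c j"
    and t: "\<And>j. j \<in> A \<Longrightarrow> 0 < t j" and less: "\<And>j. j \<in> A \<Longrightarrow> t j < t' j"
  shows "(\<Sum>j\<in>A. c j / ln (1 + t' j)) < (\<Sum>j\<in>A. c j / ln (1 + t j))"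
proof (rule sum_strict_mono[OF assms(1,2)])
  fix j assume j: "j \<in> A"
  have "0 < ln (1 + t j)" "ln (1 + t j) < ln (1 + t' j)" using t[OF j] less[OF j] by simp_all
  then show "c j / ln (1 + t' j) < c j / ln (1 + t j)"
    using c[OF j] by (intro divide_strict_left_mono) auto
qed

lemma sum_divide_ln_one_plus_gt_1:
  fixes c a :: "'a \<Rightarrow> real"
  assumes "finite A" "A \<noteq> {}" and c: "\<And>j. j \<in> A \<Longrightarrow> 0 < c j"
    and a: "\<And>j. j \<in> A \<Longrightarrow> 0 < a j"
  shows "\<exists>q>0. 1 < (\<Sum>j\<in>A. c j / ln (1 + q * a j))"
proof -
  obtain j0 where j0: "j0 \<in> A" using assms(2) by blast
  define q where "q = c j0 / a j0"
  have q: "0 < q" unfolding q_def using c[OF j0] a[OF j0] by simp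
  have "1 < c j0 / ln (1 + q * a j0)"
    using ln_add_one_self_less_self[OF c[OF j0]] c[OF j0] a[OF j0] unfolding q_def by simp
  also have "\<dots> \<le> (\<Sum>j\<in>A. c j / ln (1 + q * a j))"
    using j0 assms(1) c a q
    by (intro member_le_sum) (auto intro!: less_imp_le divide_pos_pos ln_gt_zero)
  finally show ?thesis using q by blast
qed

text \<open>Each of the N = card A terms drops below 1 / N once q a j > exp (N c j).\<close>
lemma sum_divide_ln_one_plus_lt_1:
  fixes c a :: "'a \<Rightarrow> real"
  assumes A: "finite A" "A \<noteq> {}" and c: "\<And>j. j \<in> A \<Longrightarrow> 0 < c j"
    and a: "\<And>j. j \<in> A \<Longrightarrow> 0 < a j"
  shows "\<exists>q>0. (\<Sum>j\<in>A. c j / ln (1 + q * a j)) < 1"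
proof -
  define N where "N = real (card A)"
  have N: "0 < N" unfolding N_def using A by (simp add: card_gt_0_iff)
  define q where "q = 1 + (\<Sum>j\<in>A. exp (N * c j) / a j)"
  have "0 \<le> (\<Sum>j\<in>A. exp (N * c j) / a j)" using a by (intro sum_nonneg) (simp add: less_imp_le)
  then have q: "0 < q" unfolding q_def by linarith
  have "(\<Sum>j\<in>A. c j / ln (1 + q * a j)) < (\<Sum>j\<in>A. 1 / N)"
  proof (rule sum_strict_mono[OF A])
    fix j assume j: "j \<in> A"
    have "exp (N * c j) / a j \<le> (\<Sum>j\<in>A. exp (N * c j) / a j)"
      using A(1) a j by (intro member_le_sum) (auto intro: less_imp_le)
    then have "exp (N * c j) / a j < q" unfolding q_def by simp
    then have "exp (N * c j) < q * a j" using a[OF j] by (simp add: divide_less_eq)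
    moreover have "exp (ln (1 + q * a j)) = 1 + q * a j" using q a[OF j] by (simp add: add_pos_pos)
    ultimately have "exp (N * c j) < exp (ln (1 + q * a j))" by linarith
    then have "N * c j < ln (1 + q * a j)" by (rule exp_less_cancel_iff[THEN iffD1])
    moreover have "0 < N * c j" using N c[OF j] by simp
    ultimately have "c j / ln (1 + q * a j) < c j / (N * c j)"
      using c[OF j] by (intro divide_strict_left_mono) simp_all
    then show "c j / ln (1 + q * a j) < 1 / N" using c[OF j] by simp
  qed
  also have "\<dots> = 1" unfolding N_def using A by (simp add: card_gt_0_iff)
  finally show ?thesis using q by blast
qed

lemma sum_divide_ln_one_plus_eq_1:
  fixes c a :: "'a \<Rightarrow> real"
  assumes A: "finite A" "A \<noteq> {}" and c: "\<And>j. j \<in> A \<Longrightarrow> 0 < c j"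
    and a: "\<And>j. j \<in> A \<Longrightarrow> 0 < a j"
  shows "\<exists>q>0. (\<Sum>j\<in>A. c j / ln (1 + q * a j)) = 1"
proof -
  define S where "S q = (\<Sum>j\<in>A. c j / ln (1 + q * a j))" for q
  obtain q1 where q1: "0 < q1" "1 < S q1"
    using sum_divide_ln_one_plus_gt_1[of A c a, OF A c a] unfolding S_def by blast
  obtain q2 where q2: "0 < q2" "S q2 < 1"
    using sum_divide_ln_one_plus_lt_1[of A c a, OF A c a] unfolding S_def by blast
  have "\<not> q2 < q1"
  proof
    assume "q2 < q1"
    then have "S q1 < S q2"
      unfolding S_def using q2(1) c a
      by (intro sum_divide_ln_one_plus_strict_antimono[OF A]) simp_all
    then show False using q1 q2 by linarith
  qed
  moreover have "continuous_on {q1..q2} S"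
    unfolding S_def
  proof (intro continuous_on_sum continuous_on_divide continuous_on_ln continuous_intros ballI)
    fix j q assume "j \<in> A" "q \<in> {q1..q2}"
    then have "0 < q * a j" using q1 a by auto
    then show "ln (1 + q * a j) \<noteq> 0" "1 + q * a j \<noteq> 0" by auto
  qed
  ultimately obtain q where "q1 \<le> q" "S q = 1"
    using IVT2'[of S q2 1 q1] q1 q2 by auto
  then show ?thesis using q1 unfolding S_def by (intro exI[of _ q]) auto
qed

section \<open>The non-linear power coupling equation\<close>

locale cellular_network =
  fixes J :: "'n::finite \<Rightarrow> 'u set"
    and g :: "'n \<Rightarrow> 'u \<Rightarrow> real" and \<sigma>2 :: real
    and x :: "'n \<Rightarrow> real" and r :: "'n \<Rightarrow> 'u \<Rightarrow> real"
  assumes J_fin: "\<forall>i. finite (J i)"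
    and J_ne: "\<forall>i. J i \<noteq> {}"
    and g_pos: "\<forall>k. \<forall>j\<in>(\<Union>i. J i). g k j > 0"
    and \<sigma>_pos: "\<sigma>2 > 0"
    and x_pos: "\<forall>i. x i > 0"
    and r_pos: "\<forall>i. \<forall>j\<in>J i. r i j > 0"
begin

definition interference_noise :: "('n \<Rightarrow> real) \<Rightarrow> 'n \<Rightarrow> 'u \<Rightarrow> real" where
  "interference_noise p i j = (\<Sum>k\<in>UNIV - {i}. p k * g k j * x k) + \<sigma>2"

lemma eta_altdef:
  "eta g \<sigma>2 J x r p i q = (\<Sum>j\<in>J i. (r i j / x i) / ln (1 + q * g i j / interference_noise p i j))"
  unfolding eta_def interference_noise_def ..

lemma gain_pos: "j \<in> J i \<Longrightarrow> 0 < g k j"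
  using g_pos by blast

lemma rate_load_pos: "j \<in> J i \<Longrightarrow> 0 < r i j / x i"
  using r_pos x_pos by simp

lemma interference_noise_pos:
  assumes "\<forall>k. 0 \<le> p k" and "j \<in> J i"
  shows "0 < interference_noise p i j"
proof -
  have "0 \<le> (\<Sum>k\<in>UNIV - {i}. p k * g k j * x k)"
    using assms gain_pos[OF assms(2)] x_pos by (intro sum_nonneg) (simp add: less_imp_le)
  then show ?thesis unfolding interference_noise_def using \<sigma>_pos by simp
qed

lemma interference_noise_mono:
  assumes "\<forall>k. p' k \<le> p k" and "j \<in> J i"
  shows "interference_noise p' i j \<le> interference_noise p i j"
  unfolding interference_noise_def
  using assms gain_pos[OF assms(2)] x_pos
  by (auto intro!: sum_mono mult_right_mono simp: less_imp_le)

text \<open>The noise term is what makes the inequality strict.\<close>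
lemma interference_noise_scale:
  assumes "1 < \<alpha>" and "\<forall>k. 0 \<le> p k" and "j \<in> J i"
  shows "interference_noise (\<lambda>k. \<alpha> * p k) i j < \<alpha> * interference_noise p i j"
  unfolding interference_noise_def
  using assms \<sigma>_pos by (simp add: sum_distrib_left mult.assoc distrib_left)

lemma eta_strict_antimono:
  assumes "\<forall>k. 0 \<le> p k" and "0 < q" "q < q'"
  shows "eta g \<sigma>2 J x r p i q' < eta g \<sigma>2 J x r p i q"
  unfolding eta_altdef
  using J_fin J_ne rate_load_pos interference_noise_pos[OF assms(1)] gain_pos assms(2,3)
  by (intro sum_divide_ln_one_plus_strict_antimono) (auto intro!: divide_strict_right_mono)

lemma eta_mono:
  assumes "\<forall>k. 0 \<le> p' k" "\<forall>k. p' k \<le> p k" and "0 < q"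
  shows "eta g \<sigma>2 J x r p' i q \<le> eta g \<sigma>2 J x r p i q"
  unfolding eta_altdef
proof (rule sum_divide_ln_one_plus_antimono)
  fix j assume j: "j \<in> J i"
  have p: "\<forall>k. 0 \<le> p k" using assms(1,2) by (metis order_trans)
  show "0 < r i j / x i" using rate_load_pos[OF j] .
  show "0 < q * g i j / interference_noise p i j"
    using assms(3) gain_pos[OF j, of i] interference_noise_pos[OF p j] by simp
  show "q * g i j / interference_noise p i j \<le> q * g i j / interference_noise p' i j"
    using mult_pos_pos[OF assms(3) gain_pos[OF j, of i]] interference_noise_pos[OF assms(1) j]
      interference_noise_mono[OF assms(2) j]
    by (intro divide_left_mono) simp_all
qed

lemma eta_scale:
  assumes "\<forall>k. 0 \<le> p k" and "0 < q" and "1 < \<alpha>"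
  shows "eta g \<sigma>2 J x r (\<lambda>k. \<alpha> * p k) i (\<alpha> * q) < eta g \<sigma>2 J x r p i q"
  unfolding eta_altdef
proof (rule sum_divide_ln_one_plus_strict_antimono)
  show "finite (J i)" "J i \<noteq> {}" using J_fin J_ne by auto
  fix j assume j: "j \<in> J i"
  have D: "0 < interference_noise p i j" "0 < interference_noise (\<lambda>k. \<alpha> * p k) i j"
    using assms interference_noise_pos j by simp_all
  show "0 < r i j / x i" using rate_load_pos[OF j] .
  show "0 < q * g i j / interference_noise p i j" using assms(2) gain_pos[OF j, of i] D by simp
  have "q * g i j / interference_noise p i j = (\<alpha> * q * g i j) / (\<alpha> * interference_noise p i j)"
    using assms(3) by simp
  also have "\<dots> < (\<alpha> * q * g i j) / interference_noise (\<lambda>k. \<alpha> * p k) i j"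
    using assms gain_pos[OF j, of i] D interference_noise_scale[OF assms(3,1) j]
    by (intro divide_strict_left_mono) simp_all
  finally show "q * g i j / interference_noise p i j
      < \<alpha> * q * g i j / interference_noise (\<lambda>k. \<alpha> * p k) i j" .
qed

lemma eta_eq_1_ex1:
  assumes "\<forall>k. 0 \<le> p k"
  shows "\<exists>!q. 0 < q \<and> eta g \<sigma>2 J x r p i q = 1"
proof (rule ex_ex1I)
  have "\<exists>q>0. (\<Sum>j\<in>J i. (r i j / x i) / ln (1 + q * (g i j / interference_noise p i j))) = 1"
    using J_fin J_ne rate_load_pos interference_noise_pos[OF assms] gain_pos
    by (intro sum_divide_ln_one_plus_eq_1) auto
  then show "\<exists>q. 0 < q \<and> eta g \<sigma>2 J x r p i q = 1" unfolding eta_altdef by simp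
next
  fix q q' assume "0 < q \<and> eta g \<sigma>2 J x r p i q = 1" "0 < q' \<and> eta g \<sigma>2 J x r p i q' = 1"
  then show "q = q'"
    using eta_strict_antimono[OF assms, of q q' i] eta_strict_antimono[OF assms, of q' q i]
    by (cases q q' rule: linorder_cases) auto
qed

lemma h_comp_pos_eta:
  assumes "\<forall>k. 0 \<le> p k"
  shows "0 < h_comp g \<sigma>2 J x r p i \<and> eta g \<sigma>2 J x r p i (h_comp g \<sigma>2 J x r p i) = 1"
  unfolding h_comp_def using theI'[OF eta_eq_1_ex1[OF assms]] .

lemma h_comp_eqI:
  assumes "\<forall>k. 0 \<le> p k" and "0 < q" "eta g \<sigma>2 J x r p i q = 1"
  shows "h_comp g \<sigma>2 J x r p i = q"
  unfolding h_comp_def using assms by (intro the1_equality eta_eq_1_ex1) auto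

lemma le_h_comp_iff:
  assumes p: "\<forall>k. 0 \<le> p k" and q: "0 < q"
  shows "q \<le> h_comp g \<sigma>2 J x r p i \<longleftrightarrow> 1 \<le> eta g \<sigma>2 J x r p i q"
proof -
  let ?h = "h_comp g \<sigma>2 J x r p i"
  have h: "0 < ?h" "eta g \<sigma>2 J x r p i ?h = 1" using h_comp_pos_eta[OF p] by auto
  show ?thesis
  proof
    assume "q \<le> ?h"
    then show "1 \<le> eta g \<sigma>2 J x r p i q"
      using h eta_strict_antimono[OF p q, of ?h i] by (cases "q = ?h") auto
  next
    assume "1 \<le> eta g \<sigma>2 J x r p i q"
    then show "q \<le> ?h" using h eta_strict_antimono[OF p h(1), of q i] by force
  qed
qed

lemma h_comp_mono:
  assumes p': "\<forall>k. 0 \<le> p' k" and le: "\<forall>k. p' k \<le> p k"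
  shows "h_comp g \<sigma>2 J x r p' i \<le> h_comp g \<sigma>2 J x r p i"
proof -
  have p: "\<forall>k. 0 \<le> p k" using p' le by (metis order_trans)
  have "1 = eta g \<sigma>2 J x r p' i (h_comp g \<sigma>2 J x r p' i)" using h_comp_pos_eta[OF p'] by simp
  also have "\<dots> \<le> eta g \<sigma>2 J x r p i (h_comp g \<sigma>2 J x r p' i)"
    using eta_mono[OF p' le] h_comp_pos_eta[OF p'] by blast
  finally show ?thesis using le_h_comp_iff[OF p] h_comp_pos_eta[OF p'] by blast
qed

lemma h_comp_scale:
  assumes p: "\<forall>k. 0 \<le> p k" and \<alpha>: "1 < \<alpha>"
  shows "h_comp g \<sigma>2 J x r (\<lambda>k. \<alpha> * p k) i < \<alpha> * h_comp g \<sigma>2 J x r p i"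
proof -
  have \<alpha>p: "\<forall>k. 0 \<le> \<alpha> * p k" using p \<alpha> by simp
  have h: "0 < h_comp g \<sigma>2 J x r p i" "eta g \<sigma>2 J x r p i (h_comp g \<sigma>2 J x r p i) = 1"
    using h_comp_pos_eta[OF p] by auto
  then have "eta g \<sigma>2 J x r (\<lambda>k. \<alpha> * p k) i (\<alpha> * h_comp g \<sigma>2 J x r p i) < 1"
    using eta_scale[OF p h(1) \<alpha>, of i] by simp
  moreover have "0 < \<alpha> * h_comp g \<sigma>2 J x r p i" using h(1) \<alpha> by simp
  ultimately show ?thesis using le_h_comp_iff[OF \<alpha>p] by (meson not_le)
qed

lemma standard_interference_h_vec: "standard_interference (h_vec g \<sigma>2 J x r)"
  unfolding standard_interference_def h_vec_def
  using h_comp_pos_eta h_comp_mono h_comp_scale by blast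

lemma load_f_eq: "load_f g \<sigma>2 J x r p i = x i * eta g \<sigma>2 J x r p i (p i)"
  unfolding load_f_def eta_def sum_distrib_left using x_pos
  by (intro sum.cong refl) (simp add: less_imp_neq[symmetric])

lemma load_fixpoint_iff_h_vec_fixpoint:
  assumes p: "\<forall>i. 0 < p i"
  shows "(\<forall>i. x i = load_f g \<sigma>2 J x r p i) \<longleftrightarrow> p = h_vec g \<sigma>2 J x r p"
proof -
  have p0: "\<forall>k. 0 \<le> p k" using p by (simp add: less_imp_le)
  have "x i = load_f g \<sigma>2 J x r p i \<longleftrightarrow> eta g \<sigma>2 J x r p i (p i) = 1" for i
    unfolding load_f_eq using x_pos[rule_format, of i] by auto
  also have "\<dots> i \<longleftrightarrow> p i = h_comp g \<sigma>2 J x r p i" for i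
    using h_comp_eqI[OF p0 p[rule_format, of i]] h_comp_pos_eta[OF p0, of i] by metis
  finally show ?thesis unfolding h_vec_def fun_eq_iff by simp
qed

end

lemma iap_async_sweep_eq:
  "iap_async_sweep g \<sigma>2 J x r = gauss_seidel_sweep (sorted_list_of_set UNIV) (h_vec g \<sigma>2 J x r)"
  unfolding iap_async_sweep_def gauss_seidel_sweep_def h_vec_def ..

theorem theorem2:
  fixes J :: "'n::{finite,linorder} \<Rightarrow> 'u set"
    and g :: "'n \<Rightarrow> 'u \<Rightarrow> real" and \<sigma>2 :: real
    and x :: "'n \<Rightarrow> real" and r :: "'n \<Rightarrow> 'u \<Rightarrow> real"
  assumes J_fin: "\<forall>i. finite (J i)"
    and J_ne: "\<forall>i. J i \<noteq> {}"
    and J_disj: "\<forall>i k. i \<noteq> k \<longrightarrow> J i \<inter> J k = {}"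
    and g_pos: "\<forall>k. \<forall>j\<in>(\<Union>i. J i). g k j > 0"
    and \<sigma>_pos: "\<sigma>2 > 0"
    and x_pos: "\<forall>i. x i > 0"
    and r_pos: "\<forall>i. \<forall>j\<in>J i. r i j > 0"
  shows
    "(\<forall>p. (\<forall>i. p i > 0) \<longrightarrow>
        ((\<forall>i. x i = load_f g \<sigma>2 J x r p i) \<longleftrightarrow> p = h_vec g \<sigma>2 J x r p))
     \<and> standard_interference (h_vec g \<sigma>2 J x r)
     \<and> (\<forall>p. (\<forall>i. p i > 0) \<and> p = h_vec g \<sigma>2 J x r p \<longrightarrow>
          (\<forall>q. (\<forall>i. q i > 0) \<and> q = h_vec g \<sigma>2 J x r q \<longrightarrow> q = p)
          \<and> (\<forall>p0. (\<forall>i. p0 i > 0) \<longrightarrow>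
               (\<forall>i. (\<lambda>l. ((h_vec g \<sigma>2 J x r) ^^ l) p0 i) \<longlonglongrightarrow> p i)
             \<and> (\<forall>i. (\<lambda>l. ((iap_async_sweep g \<sigma>2 J x r) ^^ l) p0 i) \<longlonglongrightarrow> p i)))"
proof -
  interpret cellular_network J g \<sigma>2 x r
    using J_fin J_ne g_pos \<sigma>_pos x_pos r_pos by unfold_locales
  let ?h = "h_vec g \<sigma>2 J x r"
  have h: "standard_interference ?h" by (rule standard_interference_h_vec)
  have sweep: "standard_interference (iap_async_sweep g \<sigma>2 J x r)"
    unfolding iap_async_sweep_eq by (intro standard_interference_gauss_seidel_sweep[OF h]) simp
  have sweep_fixpoint: "iap_async_sweep g \<sigma>2 J x r p = p" if "?h p = p" for p
    unfolding iap_async_sweep_eq using gauss_seidel_sweep_fixpoint[of ?h p, OF that] .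
  show ?thesis
    using load_fixpoint_iff_h_vec_fixpoint h
      standard_interference_fixpoint_unique[OF h]
      standard_interference_iterates_tendsto[OF h]
      standard_interference_iterates_tendsto[OF sweep] sweep_fixpoint
    by (metis (no_types, lifting))
qed

end
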